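(* Let $X$ be a reflexive Banach space with dual $X^*$, let $f\colon X\to\mathbb{R}$ and $\psi^*\colon X^*\to\mathbb{R}$ be differentiable, let $N\ge 1$, and let real coefficients $\{a_{k,i}\}_{0\le i<k\le N}$ and $\{b_{k,i}\}_{0\le i\le k\le N}$ be given, with the convention $b_{0,0}=-1$. Assume \[ \sum_{j=0}^{k+1} b_{k+1,j}=0\qquad\text{for } k=0,1,\dots,N-1 . \] Let $q_0\in X$ be arbitrary, set $r_0=-b_{N,N}\nabla f(q_0)$, and define for $k=0,1,\dots,N-1$ \[ q_{k+1}=q_k-\sum_{i=0}^{k} a_{N-i,\,N-1-k}\,\nabla\psi^*(r_i),\qquad r_{k+1}=r_k-\sum_{i=0}^{k+1} b_{N-i,\,N-1-k}\,\nabla f(q_i). \] Then $r_N=\nabla f(q_N)$.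
   Context: The iteration in the claim is called the mirror dual of the $N$-step coupled first-order method (CFOM) with the same coefficients, where the CFOM (for differentiable $f\colon X\to\mathbb{R}$, $\phi^*\colon X^*\to\mathbb{R}$) is: $y_0\in X^*$, $x_0=\nabla\phi^*(y_0)$, and for $k=0,\dots,N-1$, $y_{k+1}=y_k-\sum_{i=0}^{k}a_{k+1,i}\nabla f(x_i)$, $x_{k+1}=x_k-\sum_{i=0}^{k+1}b_{k+1,i}\nabla\phi^*(y_i)$. Gradients $\nabla f(x)\in X^*$ are Fréchet gradients, and $\nabla\psi^*(r)\in X^{**}=X$. *)

theory Defs
  imports "HOL-Analysis.Analysis"
begin

(* The dual space X* of a real Banach space X is modelled as the type
  of bounded linear functionals 'a \<Rightarrow>\<^sub>L real. *)

definition reflexive_space :: "'a::banach itself \<Rightarrow> bool" where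
  "reflexive_space _ \<longleftrightarrow>
     (\<forall>\<phi> :: ('a \<Rightarrow>\<^sub>L real) \<Rightarrow>\<^sub>L real. \<exists>x::'a. \<forall>h. blinfun_apply \<phi> h = blinfun_apply h x)"

definition grad :: "('a::real_normed_vector \<Rightarrow> real) \<Rightarrow> 'a \<Rightarrow> ('a \<Rightarrow>\<^sub>L real)" where
  "grad f x = (THE g. (f has_derivative blinfun_apply g) (at x))"

(* Gradient of \<psi> : X* \<rightarrow> R at r, an element of X** identified with X
  (via reflexivity): the x with D\<psi>(r)(h) = h(x) for all h in X*. *)
definition dgrad :: "(('a::real_normed_vector \<Rightarrow>\<^sub>L real) \<Rightarrow> real) \<Rightarrow> ('a \<Rightarrow>\<^sub>L real) \<Rightarrow> 'a" where
  "dgrad \<psi> r = (THE x. (\<psi> has_derivative (\<lambda>h. blinfun_apply h x)) (at r))"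

end

theory Submission
  imports Defs
begin

text \<open>The \<open>r\<close>-recursion alone determines \<open>r\<^sub>N\<close>. Unrolling it writes \<open>r m\<close> as a combination of the gradients
  \<open>\<nabla>f(q i)\<close>, \<open>i \<le> m\<close>, whose coefficient is minus the tail \<open>b (N-i) (N-m) + \<dots> + b (N-i) (N-i)\<close>
  of row \<open>N - i\<close>. At \<open>m = N\<close> the tails are full row sums, which vanish except for row \<open>0\<close>,
  where \<open>b 0 0 = -1\<close> leaves exactly \<open>\<nabla>f(q N)\<close>.\<close>

lemma mirror_dual_closed_form:
  fixes r g :: "nat \<Rightarrow> 'v::real_vector" and b :: "nat \<Rightarrow> nat \<Rightarrow> real"
  assumes r0: "r 0 = - (b N N *\<^sub>R g 0)"
    and r_step: "\<And>k. k < N \<Longrightarrow> r (Suc k) = r k - (\<Sum>i\<le>k+1. b (N - i) (N - 1 - k) *\<^sub>R g i)"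
    and "m \<le> N"
  shows "r m = - (\<Sum>i\<le>m. (\<Sum>j=N-m..N-i. b (N - i) j) *\<^sub>R g i)"
  using \<open>m \<le> N\<close>
proof (induction m)
  case 0
  then show ?case using r0 by simp
next
  case (Suc m)
  then have m_less: "m < N" by simp
  have tail_extend: "(\<Sum>j=N-Suc m..N-i. b (N - i) j) = b (N - i) (N - 1 - m) + (\<Sum>j=N-m..N-i. b (N - i) j)"
    if "i \<le> Suc m" for i
  proof -
    have "Suc (N - Suc m) = N - m" using m_less by simp
    moreover have "N - Suc m \<le> N - i" using that by simp
    ultimately show ?thesis by (simp add: sum.atLeast_Suc_atMost)
  qed
  have "r (Suc m) = - (\<Sum>i\<le>m. (\<Sum>j=N-m..N-i. b (N - i) j) *\<^sub>R g i)
      - (\<Sum>i\<le>Suc m. b (N - i) (N - 1 - m) *\<^sub>R g i)"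
    using r_step[OF m_less] Suc by simp
  also have "\<dots> = - (\<Sum>i\<le>Suc m. (b (N - i) (N - 1 - m) + (\<Sum>j=N-m..N-i. b (N - i) j)) *\<^sub>R g i)"
    using m_less by (simp add: scaleR_add_left sum.distrib)
  also have "\<dots> = - (\<Sum>i\<le>Suc m. (\<Sum>j=N-Suc m..N-i. b (N - i) j) *\<^sub>R g i)"
    by (simp add: tail_extend)
  finally show ?case .
qed

lemma mirror_dual_final_iterate:
  fixes r g :: "nat \<Rightarrow> 'v::real_vector" and b :: "nat \<Rightarrow> nat \<Rightarrow> real"
  assumes r0: "r 0 = - (b N N *\<^sub>R g 0)"
    and r_step: "\<And>k. k < N \<Longrightarrow> r (Suc k) = r k - (\<Sum>i\<le>k+1. b (N - i) (N - 1 - k) *\<^sub>R g i)"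
    and b00: "b 0 0 = -1"
    and row_sum: "\<And>k. k < N \<Longrightarrow> (\<Sum>j\<le>k+1. b (k+1) j) = 0"
  shows "r N = g N"
proof -
  have row_sum': "(\<Sum>j=0..N-i. b (N - i) j) = 0" if "i < N" for i
    using row_sum[of "N - i - 1"] that by (simp add: atLeast0AtMost Suc_diff_Suc)
  have "r N = - (\<Sum>i\<le>N. (\<Sum>j=0..N-i. b (N - i) j) *\<^sub>R g i)"
    using mirror_dual_closed_form[OF r0 r_step, of N] by simp
  also have "\<dots> = - (\<Sum>j=0..0. b 0 j) *\<^sub>R g N"
    by (simp add: lessThan_Suc_atMost[symmetric] row_sum')
  finally show ?thesis using b00 by simp
qed

theorem proposition3p1:
  fixes f :: "'a::banach \<Rightarrow> real"
    and \<psi> :: "('a \<Rightarrow>\<^sub>L real) \<Rightarrow> real"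
    and N :: nat
    and a b :: "nat \<Rightarrow> nat \<Rightarrow> real"
    and q :: "nat \<Rightarrow> 'a"
    and r :: "nat \<Rightarrow> ('a \<Rightarrow>\<^sub>L real)"
  assumes refl: "reflexive_space TYPE('a)"
    and f_diff: "\<And>x. f differentiable (at x)"
    and psi_diff: "\<And>y. \<psi> differentiable (at y)"
    and N_pos: "N \<ge> 1"
    and b00: "b 0 0 = -1"
    and bsum: "\<And>k. k < N \<Longrightarrow> (\<Sum>j\<le>k+1. b (k+1) j) = 0"
    and r0: "r 0 = - (b N N *\<^sub>R grad f (q 0))"
    and q_step: "\<And>k. k < N \<Longrightarrow>
        q (Suc k) = q k - (\<Sum>i\<le>k. a (N - i) (N - 1 - k) *\<^sub>R dgrad \<psi> (r i))"
    and r_step: "\<And>k. k < N \<Longrightarrow>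
        r (Suc k) = r k - (\<Sum>i\<le>k+1. b (N - i) (N - 1 - k) *\<^sub>R grad f (q i))"
  shows "r N = grad f (q N)"
  using mirror_dual_final_iterate[where g = "\<lambda>i. grad f (q i)", OF r0 r_step b00 bsum] .

end
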